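(* Let $\lambda_\pm : \mathbb{R} \to \mathbb{R}_\pm$ be defined by $\lambda_\pm(x) = x \pm \sqrt{1+x^2}$ (these are increasing bijections onto the positive and negative reals respectively), and let \[ p_\gamma' := \frac{p}{\sqrt{p^2 + |q|^2\cosh^{-2}(2\gamma)}} \in (-1,1). \] Define subsets $\sigma_\pm(U) \subset \mathbb{R}_\pm$ by \[ \sigma_\pm(U) = \begin{cases} \{\lambda_\pm(+p\sinh(2\gamma))\}, & a_m < \pm p_\gamma' < a_p, \\ \{\lambda_\pm(-p\sinh(2\gamma))\}, & a_p < \pm p_\gamma' < a_m, \\ \emptyset, & \text{otherwise}. \end{cases} \] Then the set of eigenvalues of $U$ satisfies $\sigma_{\mathrm{p}}(U) = \sigma_-(U) \cup \sigma_+(U)$.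
   Context: Let $L$ be the bilateral left shift on $\ell^2(\mathbb{Z}) = \ell^2(\mathbb{Z};\mathbb{C})$, $(L\Psi)(x) = \Psi(x+1)$; bounded sequences are identified with the corresponding multiplication operators. Fix $\gamma \in \mathbb{R}$, $p \in (-1,1)$, $q \in \mathbb{C}$ with $p^2+|q|^2 = 1$, and $a_p, a_m \in (-1,1)$, $b_p, b_m \in \mathbb{C}$ with $a_p^2 + |b_p|^2 = a_m^2 + |b_m|^2 = 1$. Let $a(x) = a_p$, $b(x) = b_p$ for $x \ge 0$ and $a(x) = a_m$, $b(x) = b_m$ for $x < 0$. On $\mathcal{H} = \ell^2(\mathbb{Z};\mathbb{C}^2) \cong \ell^2(\mathbb{Z}) \oplus \ell^2(\mathbb{Z})$ define the (generally non-unitary) two-phase split-step quantum walk $U = SC$, where \[ S = \begin{pmatrix} p & qL \\ \overline{q}L^* & -p \end{pmatrix},\qquad C = \begin{pmatrix} e^{-2\gamma} a & \overline{b} \\ b & -e^{2\gamma} a \end{pmatrix}. \] $\sigma_{\mathrm{p}}(U)$ denotes the set of $\lambda \in \mathbb{C}$ with $\ker(U - \lambda) \neq \{0\}$ in $\mathcal{H}$. $\mathbb{R}_+$ and $\mathbb{R}_-$ denote the sets of positive and negative real numbers. *)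

theory Defs
  imports "HOL-Analysis.Analysis"
begin

text \<open>States in l2(Z; C^2) are represented as functions int => complex * complex.
  The operators L, C, S, U act pointwise on arbitrary sequences; U restricted
  to l2 is the bounded operator of the paper.\<close>

definition ell2Z2 :: "(int \<Rightarrow> complex \<times> complex) set" where
  "ell2Z2 = {\<Psi>. (\<lambda>x. (cmod (fst (\<Psi> x)))\<^sup>2 + (cmod (snd (\<Psi> x)))\<^sup>2) summable_on UNIV}"

definition coin_op :: "real \<Rightarrow> (int \<Rightarrow> real) \<Rightarrow> (int \<Rightarrow> complex)
    \<Rightarrow> (int \<Rightarrow> complex \<times> complex) \<Rightarrow> (int \<Rightarrow> complex \<times> complex)" where
  "coin_op \<gamma> a b \<Psi> = (\<lambda>x.
     (of_real (exp (-2*\<gamma>) * a x) * fst (\<Psi> x) + cnj (b x) * snd (\<Psi> x),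
      b x * fst (\<Psi> x) - of_real (exp (2*\<gamma>) * a x) * snd (\<Psi> x)))"

text \<open>Shift operator S; (L Psi)(x) = Psi(x+1), (L^* Psi)(x) = Psi(x-1).\<close>
definition shift_op :: "real \<Rightarrow> complex
    \<Rightarrow> (int \<Rightarrow> complex \<times> complex) \<Rightarrow> (int \<Rightarrow> complex \<times> complex)" where
  "shift_op p q \<Psi> = (\<lambda>x.
     (of_real p * fst (\<Psi> x) + q * snd (\<Psi> (x + 1)),
      cnj q * fst (\<Psi> (x - 1)) - of_real p * snd (\<Psi> x)))"

definition walk_op :: "real \<Rightarrow> real \<Rightarrow> complex \<Rightarrow> (int \<Rightarrow> real) \<Rightarrow> (int \<Rightarrow> complex)
    \<Rightarrow> (int \<Rightarrow> complex \<times> complex) \<Rightarrow> (int \<Rightarrow> complex \<times> complex)" where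
  "walk_op \<gamma> p q a b = shift_op p q \<circ> coin_op \<gamma> a b"

definition point_spectrum :: "real \<Rightarrow> real \<Rightarrow> complex \<Rightarrow> (int \<Rightarrow> real) \<Rightarrow> (int \<Rightarrow> complex)
    \<Rightarrow> complex set" where
  "point_spectrum \<gamma> p q a b = {z. \<exists>\<Psi>\<in>ell2Z2. \<Psi> \<noteq> (\<lambda>_. (0, 0)) \<and>
      walk_op \<gamma> p q a b \<Psi> = (\<lambda>x. (z * fst (\<Psi> x), z * snd (\<Psi> x)))}"

definition two_phase :: "'a \<Rightarrow> 'a \<Rightarrow> int \<Rightarrow> 'a" where
  "two_phase vp vm x = (if x \<ge> 0 then vp else vm)"

definition lam_plus :: "real \<Rightarrow> real" where
  "lam_plus x = x + sqrt (1 + x\<^sup>2)"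

definition lam_minus :: "real \<Rightarrow> real" where
  "lam_minus x = x - sqrt (1 + x\<^sup>2)"

definition p_gamma' :: "real \<Rightarrow> real \<Rightarrow> complex \<Rightarrow> real" where
  "p_gamma' \<gamma> p q = p / sqrt (p\<^sup>2 + (cmod q)\<^sup>2 / (cosh (2*\<gamma>))\<^sup>2)"

definition sigma_plus :: "real \<Rightarrow> real \<Rightarrow> complex \<Rightarrow> real \<Rightarrow> real \<Rightarrow> complex set" where
  "sigma_plus \<gamma> p q ap am =
     (if am < p_gamma' \<gamma> p q \<and> p_gamma' \<gamma> p q < ap
        then {complex_of_real (lam_plus (p * sinh (2*\<gamma>)))}
      else if ap < p_gamma' \<gamma> p q \<and> p_gamma' \<gamma> p q < am
        then {complex_of_real (lam_plus (- p * sinh (2*\<gamma>)))}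
      else {})"

definition sigma_minus :: "real \<Rightarrow> real \<Rightarrow> complex \<Rightarrow> real \<Rightarrow> real \<Rightarrow> complex set" where
  "sigma_minus \<gamma> p q ap am =
     (if am < - p_gamma' \<gamma> p q \<and> - p_gamma' \<gamma> p q < ap
        then {complex_of_real (lam_minus (p * sinh (2*\<gamma>)))}
      else if ap < - p_gamma' \<gamma> p q \<and> - p_gamma' \<gamma> p q < am
        then {complex_of_real (lam_minus (- p * sinh (2*\<gamma>)))}
      else {})"

end

theory Submission
  imports Defs
begin

(* Since S is an involution, U Psi = z Psi is equivalent to C Psi = z S Psi, a
  first-order recurrence in x.  For a solution (f1, f2) the Wronskian-type quantity
  W x = f1 (x-1) f2 (x+1) - f2 x f1 x has constant modulus on each half-line, so l2-decay forces
  W = 0.  Hence f2 (x+1) = r f1 x for a constant r, and f1 is geometric with ratio mu(a) on each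
  half-line, where r solves a quadratic equation Q(a; 1, r) = 0 that is affine in the coin
  parameter a.  Decay on both sides forces a_p \<noteq> a_m, so both coefficients of Q vanish; this
  makes q r = sigma and z = l real, with sigma a root of c^2 sigma^2 + p (c^2+1) sigma - |q|^2
  (c = e^(2 gamma)) and l a root of l^2 - 2 eps p sinh(2 gamma) l - 1 (eps = +-1), i.e.
  l = lambda_(sgn l) (eps p sinh(2 gamma)).  Finally |mu(a_p)| < 1 < |mu(a_m)| is equivalent to
  eps a_m < eps sgn(l) p'_gamma < eps a_p.  Conversely, these data define an explicit
  two-sided geometric eigenvector. *)

section \<open>Shift and walk operators\<close>

lemma shift_op_involution:
  assumes "p^2 + (cmod q)^2 = 1"
  shows "shift_op p q (shift_op p q \<Phi>) = \<Phi>"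
proof
  fix x
  have "(cmod q)^2 = 1 - p^2" using assms by simp
  then have "q * cnj q = 1 - (complex_of_real p)^2"
    using complex_norm_square[of q] by simp
  then have "complex_of_real p * (complex_of_real p * u + q * v) + q * (cnj q * u - complex_of_real p * v) = u"
    and "cnj q * (complex_of_real p * u + q * v) - complex_of_real p * (cnj q * u - complex_of_real p * v) = v"
    for u v by algebra+
  then show "shift_op p q (shift_op p q \<Phi>) x = \<Phi> x"
    unfolding shift_op_def by simp
qed

lemma shift_op_scale:
  "shift_op p q (\<lambda>x. (z * fst (\<Phi> x), z * snd (\<Phi> x)))
     = (\<lambda>x. (z * fst (shift_op p q \<Phi> x), z * snd (shift_op p q \<Phi> x)))"
  unfolding shift_op_def by (simp add: algebra_simps)

lemma walk_op_eigen_iff: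
  assumes "p^2 + (cmod q)^2 = 1"
  shows "walk_op \<gamma> p q a b \<Psi> = (\<lambda>x. (z * fst (\<Psi> x), z * snd (\<Psi> x))) \<longleftrightarrow>
         coin_op \<gamma> a b \<Psi> = (\<lambda>x. (z * fst (shift_op p q \<Psi> x), z * snd (shift_op p q \<Psi> x)))"
    (is "_ \<longleftrightarrow> _ = ?z_S\<Psi>")
proof
  assume eigen: "walk_op \<gamma> p q a b \<Psi> = (\<lambda>x. (z * fst (\<Psi> x), z * snd (\<Psi> x)))"
  have "coin_op \<gamma> a b \<Psi> = shift_op p q (shift_op p q (coin_op \<gamma> a b \<Psi>))"
    using shift_op_involution[OF assms] by simp
  also have "\<dots> = shift_op p q (\<lambda>x. (z * fst (\<Psi> x), z * snd (\<Psi> x)))"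
    using eigen unfolding walk_op_def by simp
  also have "\<dots> = ?z_S\<Psi>" by (rule shift_op_scale)
  finally show "coin_op \<gamma> a b \<Psi> = ?z_S\<Psi>" .
next
  assume coin: "coin_op \<gamma> a b \<Psi> = ?z_S\<Psi>"
  have "walk_op \<gamma> p q a b \<Psi> = shift_op p q ?z_S\<Psi>" using coin unfolding walk_op_def by simp
  also have "\<dots> = (\<lambda>x. (z * fst (shift_op p q (shift_op p q \<Psi>) x), z * snd (shift_op p q (shift_op p q \<Psi>) x)))"
    by (rule shift_op_scale)
  also have "\<dots> = (\<lambda>x. (z * fst (\<Psi> x), z * snd (\<Psi> x)))" using shift_op_involution[OF assms] by simp
  finally show "walk_op \<gamma> p q a b \<Psi> = (\<lambda>x. (z * fst (\<Psi> x), z * snd (\<Psi> x)))" .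
qed

section \<open>Square-summable and geometric sequences\<close>

lemma ell2Z2_tendsto_zero:
  assumes "\<Psi> \<in> ell2Z2" "inj g"
  shows "(\<lambda>n. fst (\<Psi> (g n))) \<longlonglongrightarrow> 0" "(\<lambda>n. snd (\<Psi> (g n))) \<longlonglongrightarrow> 0"
proof -
  define h where "h x = (cmod (fst (\<Psi> x)))\<^sup>2 + (cmod (snd (\<Psi> x)))\<^sup>2" for x
  have "h summable_on UNIV" using assms(1) unfolding ell2Z2_def h_def by simp
  then have "h summable_on range g" by (rule summable_on_subset) auto
  then have "(h \<circ> g) summable_on UNIV"
    using summable_on_reindex[OF inj_on_subset[OF assms(2)]] by auto
  then have "summable (h \<circ> g)"
    by (subst summable_on_UNIV_nonneg_real_iff[symmetric]) (auto simp: h_def)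
  then have h0: "(\<lambda>n. h (g n)) \<longlonglongrightarrow> 0"
    using summable_LIMSEQ_zero by (simp add: o_def)
  have sq: "(\<lambda>n. (cmod (fst (\<Psi> (g n))))\<^sup>2) \<longlonglongrightarrow> 0" "(\<lambda>n. (cmod (snd (\<Psi> (g n))))\<^sup>2) \<longlonglongrightarrow> 0"
    by (rule tendsto_sandwich[OF _ _ tendsto_const h0]; auto simp: h_def)+
  have "(\<lambda>n. cmod (fst (\<Psi> (g n)))) \<longlonglongrightarrow> 0" "(\<lambda>n. cmod (snd (\<Psi> (g n)))) \<longlonglongrightarrow> 0"
    using tendsto_real_sqrt[OF sq(1)] tendsto_real_sqrt[OF sq(2)] by simp_all
  then show "(\<lambda>n. fst (\<Psi> (g n))) \<longlonglongrightarrow> 0" "(\<lambda>n. snd (\<Psi> (g n))) \<longlonglongrightarrow> 0"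
    by (simp_all add: tendsto_norm_zero_iff)
qed

lemma geometric_tendsto_zero_imp_norm_less_1:
  fixes g :: "nat \<Rightarrow> 'a::real_normed_field"
  assumes "\<And>n. g (Suc n) = \<rho> * g n" "g \<longlonglongrightarrow> 0" "g 0 \<noteq> 0"
  shows "norm \<rho> < 1"
proof (rule ccontr)
  assume "\<not> norm \<rho> < 1"
  have g_power: "g n = \<rho>^n * g 0" for n by (induction n) (auto simp: assms(1))
  have "norm (g 0) \<le> norm (g n)" for n
  proof -
    have "1 * norm (g 0) \<le> norm \<rho> ^ n * norm (g 0)"
      using \<open>\<not> norm \<rho> < 1\<close> by (intro mult_right_mono) (simp_all add: one_le_power)
    also have "\<dots> = norm (g n)" using g_power[of n] by (simp add: norm_mult norm_power)
    finally show ?thesis by simp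
  qed
  moreover have "(\<lambda>n. norm (g n)) \<longlonglongrightarrow> 0"
    using assms(2) by (simp add: tendsto_norm_zero_iff)
  ultimately have "norm (g 0) \<le> 0" by (intro LIMSEQ_le_const) auto
  then show False using assms(3) by simp
qed

lemma backward_geometric_tendsto_zero_imp_norm_greater_1:
  fixes g :: "nat \<Rightarrow> 'a::real_normed_field"
  assumes "\<And>n. g n = \<rho> * g (Suc n)" "g \<longlonglongrightarrow> 0" "g 0 \<noteq> 0"
  shows "norm \<rho> > 1"
proof -
  have "\<rho> \<noteq> 0" using assms(1)[of 0] assms(3) by auto
  then have "g (Suc n) = inverse \<rho> * g n" for n using assms(1)[of n] by simp
  then have "norm (inverse \<rho>) < 1"
    using assms(2,3) by (rule geometric_tendsto_zero_imp_norm_less_1)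
  then show ?thesis using \<open>\<rho> \<noteq> 0\<close> by (simp add: norm_inverse inverse_less_1_iff)
qed

lemma tendsto_zero_constant_norm:
  assumes "\<And>n. norm (w n) = C" "w \<longlonglongrightarrow> 0"
  shows "C = 0"
proof -
  have "(\<lambda>n. norm (w n)) \<longlonglongrightarrow> 0" using assms(2) by (simp add: tendsto_norm_zero_iff)
  then show ?thesis using assms(1) by (simp add: LIMSEQ_const_iff)
qed

lemma two_sided_geometric_summable_on:
  fixes \<rho>1 \<rho>2 :: real
  assumes "0 \<le> \<rho>1" "\<rho>1 < 1" "0 \<le> \<rho>2" "\<rho>2 < 1"
  shows "(\<lambda>x::int. if 0 \<le> x then \<rho>1 ^ nat x else \<rho>2 ^ nat (-x)) summable_on UNIV"
proof -
  define G where "G = (\<lambda>x::int. if 0 \<le> x then \<rho>1 ^ nat x else \<rho>2 ^ nat (-x))"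
  define h where "h = (\<lambda>n::nat. - int n - 1)"
  have "(\<lambda>n. \<rho>1 ^ n) summable_on UNIV" "(\<lambda>n. \<rho>2 * \<rho>2 ^ n) summable_on UNIV"
    using assms by (simp_all add: summable_on_UNIV_nonneg_real_iff summable_geometric)
  moreover have "G \<circ> int = (\<lambda>n. \<rho>1 ^ n)" "G \<circ> h = (\<lambda>n. \<rho>2 * \<rho>2 ^ n)"
    unfolding G_def h_def by (auto simp: fun_eq_iff nat_add_distrib)
  moreover have "inj h" unfolding h_def by (auto simp: inj_def)
  ultimately have "G summable_on range int" "G summable_on range h"
    by (simp_all add: summable_on_reindex)
  then have "G summable_on (range int \<union> range h)" by (rule summable_on_union)
  moreover have "range int \<union> range h = UNIV"
  proof -
    have "x \<in> range int \<union> range h" for x :: int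
    proof (cases "0 \<le> x")
      case True then show ?thesis by (metis UnI1 nonneg_int_cases rangeI)
    next
      case False then have "x = h (nat (-x-1))" unfolding h_def by simp
      then show ?thesis by blast
    qed
    then show ?thesis by blast
  qed
  ultimately show ?thesis unfolding G_def by simp
qed

definition two_sided_geometric :: "'a::field \<Rightarrow> 'a \<Rightarrow> int \<Rightarrow> 'a" where
  "two_sided_geometric \<mu>p \<mu>m x = (if 0 \<le> x then \<mu>p ^ nat x else inverse \<mu>m ^ nat (-x))"

lemma two_sided_geometric_step:
  assumes "\<mu>m \<noteq> 0"
  shows "two_sided_geometric \<mu>p \<mu>m (x+1) = (if 0 \<le> x then \<mu>p else \<mu>m) * two_sided_geometric \<mu>p \<mu>m x"
proof (cases "0 \<le> x")
  case True
  then have "nat (x+1) = Suc (nat x)" by simp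
  with True show ?thesis unfolding two_sided_geometric_def by simp
next
  case False
  show ?thesis
  proof (cases "x = -1")
    case True then show ?thesis unfolding two_sided_geometric_def using assms by simp
  next
    case False
    with \<open>\<not> 0 \<le> x\<close> have "nat (-x) = Suc (nat (-(x+1)))" by simp
    with \<open>\<not> 0 \<le> x\<close> False assms show ?thesis unfolding two_sided_geometric_def by simp
  qed
qed

lemma two_sided_geometric_square_summable:
  fixes \<mu>p \<mu>m :: "'a::real_normed_field"
  assumes "norm \<mu>p < 1" "norm \<mu>m > 1"
  shows "(\<lambda>x. (norm (two_sided_geometric \<mu>p \<mu>m x))^2) summable_on UNIV"
proof -
  have "norm (inverse \<mu>m) < 1" using assms(2) by (simp add: norm_inverse inverse_less_1_iff)
  then have "(\<lambda>x::int. if 0 \<le> x then ((norm \<mu>p)^2) ^ nat x else ((norm (inverse \<mu>m))^2) ^ nat (-x)) summable_on UNIV"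
    using assms(1) by (intro two_sided_geometric_summable_on) (simp_all add: abs_square_less_1)
  moreover have "(norm (two_sided_geometric \<mu>p \<mu>m x))^2
      = (if 0 \<le> x then ((norm \<mu>p)^2) ^ nat x else ((norm (inverse \<mu>m))^2) ^ nat (-x))" for x
    unfolding two_sided_geometric_def by (simp add: norm_power mult.commute flip: power_mult)
  ultimately show ?thesis by simp
qed

lemma shifted_pair_in_ell2Z2:
  assumes "(\<lambda>x. (cmod (\<nu> x))^2) summable_on UNIV"
  shows "(\<lambda>x. (\<nu> (x+1), r * \<nu> x)) \<in> ell2Z2"
proof -
  have "bij_betw (\<lambda>x::int. x+1) UNIV UNIV" by (rule bij_betwI[of _ _ _ "\<lambda>x. x - 1"]) auto
  then have "(\<lambda>x. (cmod (\<nu> (x+1)))^2) summable_on UNIV"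
    using assms summable_on_reindex_bij_betw[of "\<lambda>x::int. x+1" UNIV UNIV "\<lambda>x. (cmod (\<nu> x))^2"] by simp
  then have "(\<lambda>x. (cmod (\<nu> (x+1)))^2 + (cmod r)^2 * (cmod (\<nu> x))^2) summable_on UNIV"
    by (intro summable_on_add summable_on_cmult_right assms)
  then show ?thesis unfolding ell2Z2_def by (simp add: norm_mult power_mult_distrib)
qed

section \<open>The spectral equations\<close>

lemma real_quadratic_root_is_real:
  fixes s :: complex and \<alpha> \<beta> g :: real
  assumes "\<alpha> \<noteq> 0" and root: "complex_of_real \<alpha> * s^2 + complex_of_real \<beta> * s + complex_of_real g = 0"
    and "\<beta>^2 - 4*\<alpha>*g \<ge> 0"
  obtains \<sigma> where "s = complex_of_real \<sigma>"
proof -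
  define w where "w = 2 * complex_of_real \<alpha> * s + complex_of_real \<beta>"
  define d where "d = sqrt (\<beta>^2 - 4*\<alpha>*g)"
  have "w^2 = (complex_of_real \<beta>)^2 - 4 * complex_of_real \<alpha> * complex_of_real g"
    unfolding w_def using root by algebra
  also have "\<dots> = (complex_of_real d)^2"
    unfolding d_def using assms(3) by (simp flip: of_real_power)
  finally have "(w - complex_of_real d) * (w + complex_of_real d) = 0"
    by (simp add: power2_eq_square algebra_simps)
  then have "w = complex_of_real d \<or> w = complex_of_real (- d)"
    by (metis eq_neg_iff_add_eq_0 eq_iff_diff_eq_0 mult_eq_0_iff of_real_minus)
  then obtain t where t: "w = complex_of_real t" by blast
  have "s = (w - complex_of_real \<beta>) / (2 * complex_of_real \<alpha>)" unfolding w_def using assms(1) by simp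
  also have "\<dots> = complex_of_real ((t - \<beta>) / (2*\<alpha>))" unfolding t by simp
  finally show ?thesis by (rule that)
qed

lemma lam_plus_root: "lam_plus x > 0" "(lam_plus x)^2 - 2*x*lam_plus x - 1 = 0"
proof -
  have "\<bar>x\<bar> < sqrt (1 + x^2)" by (rule real_less_rsqrt) simp
  then show "lam_plus x > 0" unfolding lam_plus_def by linarith
  show "(lam_plus x)^2 - 2*x*lam_plus x - 1 = 0"
    unfolding lam_plus_def by (simp add: power2_eq_square algebra_simps)
qed

lemma lam_minus_root: "lam_minus x < 0" "(lam_minus x)^2 - 2*x*lam_minus x - 1 = 0"
proof -
  have "\<bar>x\<bar> < sqrt (1 + x^2)" by (rule real_less_rsqrt) simp
  then show "lam_minus x < 0" unfolding lam_minus_def by linarith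
  show "(lam_minus x)^2 - 2*x*lam_minus x - 1 = 0"
    unfolding lam_minus_def by (simp add: power2_eq_square algebra_simps)
qed

lemma quadratic_root_eq_lam:
  fixes x l :: real
  assumes "l^2 - 2*x*l - 1 = 0"
  shows "l > 0 \<Longrightarrow> l = lam_plus x" "l < 0 \<Longrightarrow> l = lam_minus x"
proof -
  define S where "S = sqrt (1 + x^2)"
  have S2: "S^2 = 1 + x^2" unfolding S_def by simp
  have Sx: "\<bar>x\<bar> < S" unfolding S_def by (rule real_less_rsqrt) simp
  have "(l - x - S) * (l - x + S) = 0" using assms S2 by (simp add: power2_eq_square algebra_simps)
  then have "l = x + S \<or> l = x - S" by auto
  then show "l > 0 \<Longrightarrow> l = lam_plus x" "l < 0 \<Longrightarrow> l = lam_minus x"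
    using Sx unfolding lam_plus_def lam_minus_def S_def[symmetric] by auto
qed

text \<open>In the application \<open>c = e\<^sup>2\<^sup>\<gamma>\<close>, \<open>l\<close> is the eigenvalue, \<open>\<sigma> = q r\<close> where \<open>r\<close> is the constant ratio
  \<open>f2 (x+1) / f1 x\<close> of an eigenvector, and \<open>\<epsilon> = \<plusminus>1\<close>.\<close>

lemma spectral_root_bound:
  fixes c p \<sigma> :: real
  assumes c: "c > 0" and p: "-1 < p" "p < 1"
    and root: "c^2*\<sigma>^2 + p*(c^2+1)*\<sigma> - (1 - p^2) = 0"
  shows "p*\<sigma> - (1 - p^2) < 0"
proof (rule ccontr)
  assume "\<not> ?thesis"
  then have "(c^2+1)*(1 - p^2) \<le> (c^2+1)*(p*\<sigma>)" by (intro mult_left_mono) auto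
  moreover have "c^2 * (1 - p^2) > 0" using c p by (simp add: abs_square_less_1)
  moreover have "c^2*\<sigma>^2 \<ge> 0" by simp
  moreover have "(c^2+1)*(1 - p^2) = c^2*(1 - p^2) + (1 - p^2)" "(c^2+1)*(p*\<sigma>) = p*(c^2+1)*\<sigma>"
    by (simp_all add: algebra_simps)
  ultimately have "c^2*\<sigma>^2 + p*(c^2+1)*\<sigma> - (1 - p^2) > 0" by linarith
  then show False using root by simp
qed

lemma spectral_root_sign:
  fixes c p l \<sigma> \<epsilon> :: real
  assumes c: "c > 0" and p: "-1 < p" "p < 1" and eps: "\<epsilon> = 1 \<or> \<epsilon> = -1" and "l \<noteq> 0"
    and rel: "l * (p*\<sigma> - (1 - p^2)) = \<epsilon> * c * \<sigma>"
    and root: "c^2*\<sigma>^2 + p*(c^2+1)*\<sigma> - (1 - p^2) = 0"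
  shows "\<sigma> \<noteq> 0" "sgn \<sigma> = - \<epsilon> * sgn l"
proof -
  have neg: "p*\<sigma> - (1 - p^2) < 0" by (rule spectral_root_bound[OF c p root])
  show "\<sigma> \<noteq> 0" using neg rel \<open>l \<noteq> 0\<close> by auto
  have "- sgn l = sgn (l * (p*\<sigma> - (1 - p^2)))" using neg by (simp add: sgn_mult)
  also have "\<dots> = \<epsilon> * sgn \<sigma>" unfolding rel using eps c by (auto simp: sgn_mult)
  finally show "sgn \<sigma> = - \<epsilon> * sgn l" using eps by auto
qed

lemma spectral_root_scaled:
  fixes c p l \<sigma> \<epsilon> :: real
  assumes eps: "\<epsilon> = 1 \<or> \<epsilon> = -1" and rel: "\<sigma> * (l*p - \<epsilon>*c) = l * (1 - p^2)"
  shows "(c^2*\<sigma>^2 + p*(c^2+1)*\<sigma> - (1 - p^2)) * (l*p - \<epsilon>*c)^2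
           = (1 - p^2) * c * (c*(l^2 - 1) - \<epsilon>*l*p*(c^2 - 1))"
proof -
  have "(c^2*\<sigma>^2 + p*(c^2+1)*\<sigma> - (1 - p^2)) * (l*p - \<epsilon>*c)^2
      = c^2*(\<sigma>*(l*p - \<epsilon>*c))^2 + p*(c^2+1)*(\<sigma>*(l*p - \<epsilon>*c))*(l*p - \<epsilon>*c) - (1 - p^2)*(l*p - \<epsilon>*c)^2"
    by (simp add: power2_eq_square algebra_simps)
  also have "\<dots> = (1 - p^2) * c * (c*(l^2 - 1) - \<epsilon>*l*p*(c^2 - 1)) + (1 - p^2)*c^2*(1 - \<epsilon>^2)"
    unfolding rel by (simp add: power2_eq_square algebra_simps)
  finally show ?thesis using eps by auto
qed

lemma spectral_eigenvalue_equation: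
  fixes c p l \<sigma> \<epsilon> :: real
  assumes c: "c > 0" and p: "-1 < p" "p < 1" and eps: "\<epsilon> = 1 \<or> \<epsilon> = -1"
    and rel: "l * (p*\<sigma> - (1 - p^2)) = \<epsilon> * c * \<sigma>"
    and root: "c^2*\<sigma>^2 + p*(c^2+1)*\<sigma> - (1 - p^2) = 0"
  shows "l^2 - 1 = \<epsilon> * l * p * (c - 1/c)"
proof -
  have "\<sigma> * (l*p - \<epsilon>*c) = l * (1 - p^2)" using rel by (simp add: algebra_simps)
  from spectral_root_scaled[OF eps this] root
  have "(1 - p^2) * c * (c*(l^2 - 1) - \<epsilon>*l*p*(c^2 - 1)) = 0" by simp
  moreover have "(1 - p^2) * c \<noteq> 0" using c p abs_square_less_1[of p] by auto
  ultimately have "c*(l^2 - 1) = \<epsilon>*l*p*(c^2 - 1)" by simp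
  then show ?thesis using c by (simp add: field_simps power2_eq_square)
qed

lemma eigenvalue_denominator_pos:
  fixes c p y :: real
  assumes c: "c > 0" and p: "-1 < p" "p < 1" and "y \<noteq> 0"
    and rel: "c * (y^2 - 1) = y * p * (c^2 - 1)"
  shows "c - y*p > 0"
proof (rule ccontr)
  define u where "u = c - y*p"
  define v where "v = c*y + p"
  assume "\<not> ?thesis"
  then have "u \<le> 0" unfolding u_def by simp
  have "u * v - y * c^2 * (1 - p^2) = - p * (c * (y^2 - 1) - y * p * (c^2 - 1))"
    unfolding u_def v_def by (simp add: power2_eq_square algebra_simps)
  then have uv: "u * v = y * c^2 * (1 - p^2)" using rel by simp
  have "c * (y*u + v) - y * (c^2*(2 - p^2) + p^2) = - p * (c * (y^2 - 1) - y * p * (c^2 - 1))"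
    unfolding u_def v_def by (simp add: power2_eq_square algebra_simps)
  then have sv: "c * (y*u + v) = y * (c^2*(2 - p^2) + p^2)" using rel by simp
  have k: "1 - p^2 > 0" using p by (simp add: abs_square_less_1)
  then have P: "c^2*(2 - p^2) + p^2 > 0" using c by (simp add: add_pos_nonneg)
  show False
  proof (cases "y > 0")
    case True
    then have "u * v > 0" using uv c k by simp
    then have "u < 0 \<and> v < 0" using \<open>u \<le> 0\<close> by (auto simp: zero_less_mult_iff)
    then have "y*u + v < 0" using True by (simp add: add_neg_neg mult_pos_neg)
    moreover have "c * (y*u + v) > 0" using sv True P by simp
    ultimately show False using c by (simp add: zero_less_mult_iff)
  next
    case False
    then have y: "y < 0" using \<open>y \<noteq> 0\<close> by simp
    then have "u * v < 0" using uv c k by (simp add: mult_neg_pos)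
    then have "u < 0 \<and> v > 0" using \<open>u \<le> 0\<close> by (auto simp: mult_less_0_iff)
    then have "y*u + v > 0" using y by (simp add: add_pos_pos mult_neg_neg)
    moreover have "c * (y*u + v) < 0" using sv y P by (simp add: mult_neg_pos)
    ultimately show False using c by (simp add: mult_less_0_iff)
  qed
qed

lemma spectral_root_from_eigenvalue:
  fixes c p l \<epsilon> :: real
  assumes c: "c > 0" and p: "-1 < p" "p < 1" and eps: "\<epsilon> = 1 \<or> \<epsilon> = -1" and "l \<noteq> 0"
    and eigen: "l^2 - 1 = \<epsilon> * l * p * (c - 1/c)"
  defines "\<sigma> \<equiv> l * (1 - p^2) / (l*p - \<epsilon>*c)"
  shows "l * (p*\<sigma> - (1 - p^2)) = \<epsilon> * c * \<sigma>"
    and "c^2*\<sigma>^2 + p*(c^2+1)*\<sigma> - (1 - p^2) = 0"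
proof -
  have eigen': "c*(l^2 - 1) = \<epsilon>*l*p*(c^2 - 1)"
    using eigen c by (simp add: field_simps power2_eq_square)
  then have "c * ((\<epsilon>*l)^2 - 1) = (\<epsilon>*l) * p * (c^2 - 1)"
    using eps by (auto simp: power_mult_distrib)
  then have "c - (\<epsilon>*l)*p > 0"
    using eigenvalue_denominator_pos[OF c p, of "\<epsilon>*l"] \<open>l \<noteq> 0\<close> eps by auto
  then have d: "l*p - \<epsilon>*c \<noteq> 0" using eps by auto
  then have rel: "\<sigma> * (l*p - \<epsilon>*c) = l * (1 - p^2)" unfolding \<sigma>_def by simp
  then show "l * (p*\<sigma> - (1 - p^2)) = \<epsilon> * c * \<sigma>" by (simp add: algebra_simps)
  from spectral_root_scaled[OF eps rel] eigen' d
  show "c^2*\<sigma>^2 + p*(c^2+1)*\<sigma> - (1 - p^2) = 0" by simp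
qed

lemma spectral_second_equation:
  fixes c p l \<sigma> \<epsilon> :: real
  assumes c: "c > 0" and p: "-1 < p" "p < 1" and eps: "\<epsilon> = 1 \<or> \<epsilon> = -1"
    and rel: "l * (p*\<sigma> - (1 - p^2)) = \<epsilon> * c * \<sigma>"
    and root: "c^2*\<sigma>^2 + p*(c^2+1)*\<sigma> - (1 - p^2) = 0"
  shows "l^2 * (p*\<sigma> - (1 - p^2)) * (\<sigma> + p) + \<sigma> = 0"
proof -
  have "(p*\<sigma> - (1 - p^2)) * (l^2 * (p*\<sigma> - (1 - p^2)) * (\<sigma> + p) + \<sigma>)
        = (l * (p*\<sigma> - (1 - p^2)))^2 * (\<sigma> + p) + \<sigma> * (p*\<sigma> - (1 - p^2))"
    by (simp add: power2_eq_square algebra_simps)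
  also have "\<dots> = \<epsilon>^2 * \<sigma> * (c^2*\<sigma>^2 + p*(c^2+1)*\<sigma> - (1 - p^2)) + (1 - \<epsilon>^2) * \<sigma> * (p*\<sigma> - (1 - p^2))"
    unfolding rel by (simp add: power2_eq_square algebra_simps)
  also have "\<dots> = 0" using root eps by auto
  finally show ?thesis using spectral_root_bound[OF c p root] by simp
qed

lemma decay_discriminant_factorisation:
  fixes c p l \<sigma> \<epsilon> a :: real
  assumes eps: "\<epsilon> = 1 \<or> \<epsilon> = -1"
    and rel: "l * (p*\<sigma> - (1 - p^2)) = \<epsilon> * c * \<sigma>"
  shows "(l*(1-p^2) + (c*a - l*p)*\<sigma>)^2 - (1-p^2)*(1-a^2)
          = (1 - \<epsilon>*a) * ((c^2*\<sigma>^2 - (1-p^2)) - \<epsilon>*a*(c^2*\<sigma>^2 + (1-p^2)))"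
proof -
  have "l*(1-p^2) + (c*a - l*p)*\<sigma> = c*\<sigma>*(a - \<epsilon>)" using rel by (simp add: algebra_simps)
  moreover have "(c*\<sigma>*(a - \<epsilon>))^2 - (1-p^2)*(1-a^2)
     = (1 - \<epsilon>*a) * ((c^2*\<sigma>^2 - (1-p^2)) - \<epsilon>*a*(c^2*\<sigma>^2 + (1-p^2)))"
    using eps by (auto simp: power2_eq_square algebra_simps)
  ultimately show ?thesis by simp
qed

lemma spectral_root_p_gamma:
  fixes c p \<sigma> :: real
  assumes c: "c > 0" and p: "-1 < p" "p < 1" and "\<sigma> \<noteq> 0"
    and root: "c^2*\<sigma>^2 + p*(c^2+1)*\<sigma> - (1 - p^2) = 0"
  shows "c^2*\<sigma>^2 - (1-p^2)
    = (- sgn \<sigma> * (p * ((c + 1/c)/2) / sqrt (p^2 * ((c + 1/c)/2)^2 + (1-p^2)))) * (c^2*\<sigma>^2 + (1-p^2))"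
proof -
  define ch where "ch = (c + 1/c)/2"
  define k where "k = 1 - p^2"
  define D where "D = sqrt (p^2 * ch^2 + k)"
  define M where "M = c^2*\<sigma>^2 + k"
  have k: "k > 0" using p unfolding k_def by (simp add: abs_square_less_1)
  have c2: "c^2 + 1 = 2*c*ch" using c unfolding ch_def by (simp add: field_simps power2_eq_square)
  have D: "D > 0" "D^2 = p^2 * ch^2 + k" unfolding D_def using k by (simp_all add: add_nonneg_pos)
  have M: "M > 0" unfolding M_def using k by (simp add: add_nonneg_pos)
  have N: "c^2*\<sigma>^2 - k = - p*(c^2+1)*\<sigma>" using root unfolding k_def by (simp add: algebra_simps)
  have "M^2 = (c^2*\<sigma>^2 - k)^2 + 4*c^2*\<sigma>^2*k" unfolding M_def by (simp add: power2_eq_square algebra_simps)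
  also have "\<dots> = (p*(2*c*ch)*\<sigma>)^2 + 4*c^2*\<sigma>^2*k" unfolding N c2[symmetric] by (simp add: power2_eq_square)
  also have "\<dots> = (2*c*\<bar>\<sigma>\<bar>*D)^2" unfolding power_mult_distrib D(2) by (simp add: power2_eq_square algebra_simps)
  finally have "M = 2*c*\<bar>\<sigma>\<bar>*D" using M c D(1) by (simp add: power2_eq_iff_nonneg)
  then have "(- sgn \<sigma> * (p * ch / D)) * M = - p * (2*c*ch) * (sgn \<sigma> * \<bar>\<sigma>\<bar>)"
    using D(1) by (simp add: field_simps)
  also have "\<dots> = c^2*\<sigma>^2 - k" unfolding sgn_mult_abs c2[symmetric] N by simp
  finally show ?thesis unfolding M_def D_def ch_def k_def by simp
qed

lemma mem_sigma_plus_iff: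
  "z \<in> sigma_plus \<gamma> p q ap am \<longleftrightarrow>
    (\<exists>l \<epsilon>. z = complex_of_real l \<and> l > 0 \<and> (\<epsilon> = 1 \<or> \<epsilon> = -1)
       \<and> l^2 - 2*(\<epsilon>*p * sinh (2*\<gamma>))*l - 1 = 0
       \<and> \<epsilon>*am < \<epsilon>*p_gamma' \<gamma> p q \<and> \<epsilon>*p_gamma' \<gamma> p q < \<epsilon>*ap)"
  (is "_ \<longleftrightarrow> (\<exists>l \<epsilon>. ?data l \<epsilon>)")
proof
  assume "z \<in> sigma_plus \<gamma> p q ap am"
  then consider "am < p_gamma' \<gamma> p q" "p_gamma' \<gamma> p q < ap" "z = complex_of_real (lam_plus (p * sinh (2*\<gamma>)))"
    | "ap < p_gamma' \<gamma> p q" "p_gamma' \<gamma> p q < am" "z = complex_of_real (lam_plus (- p * sinh (2*\<gamma>)))"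
    unfolding sigma_plus_def by (auto split: if_splits)
  then show "\<exists>l \<epsilon>. ?data l \<epsilon>"
  proof cases
    case 1
    then have "?data (lam_plus (p * sinh (2*\<gamma>))) 1" using lam_plus_root by simp
    then show ?thesis by blast
  next
    case 2
    then have "?data (lam_plus (- p * sinh (2*\<gamma>))) (-1)" using lam_plus_root[of "- p * sinh (2*\<gamma>)"] by simp
    then show ?thesis by blast
  qed
next
  assume "\<exists>l \<epsilon>. ?data l \<epsilon>"
  then obtain l \<epsilon> where data: "?data l \<epsilon>" by blast
  then have "l = lam_plus (\<epsilon>*p * sinh (2*\<gamma>))" using quadratic_root_eq_lam(1) by blast
  with data show "z \<in> sigma_plus \<gamma> p q ap am" unfolding sigma_plus_def by auto
qed

lemma mem_sigma_minus_iff: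
  "z \<in> sigma_minus \<gamma> p q ap am \<longleftrightarrow>
    (\<exists>l \<epsilon>. z = complex_of_real l \<and> l < 0 \<and> (\<epsilon> = 1 \<or> \<epsilon> = -1)
       \<and> l^2 - 2*(\<epsilon>*p * sinh (2*\<gamma>))*l - 1 = 0
       \<and> \<epsilon>*am < - \<epsilon>*p_gamma' \<gamma> p q \<and> - \<epsilon>*p_gamma' \<gamma> p q < \<epsilon>*ap)"
  (is "_ \<longleftrightarrow> (\<exists>l \<epsilon>. ?data l \<epsilon>)")
proof
  assume "z \<in> sigma_minus \<gamma> p q ap am"
  then consider "am < - p_gamma' \<gamma> p q" "- p_gamma' \<gamma> p q < ap" "z = complex_of_real (lam_minus (p * sinh (2*\<gamma>)))"
    | "ap < - p_gamma' \<gamma> p q" "- p_gamma' \<gamma> p q < am" "z = complex_of_real (lam_minus (- p * sinh (2*\<gamma>)))"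
    unfolding sigma_minus_def by (auto split: if_splits)
  then show "\<exists>l \<epsilon>. ?data l \<epsilon>"
  proof cases
    case 1
    then have "?data (lam_minus (p * sinh (2*\<gamma>))) 1" using lam_minus_root by simp
    then show ?thesis by blast
  next
    case 2
    then have "?data (lam_minus (- p * sinh (2*\<gamma>))) (-1)" using lam_minus_root[of "- p * sinh (2*\<gamma>)"] by simp
    then show ?thesis by blast
  qed
next
  assume "\<exists>l \<epsilon>. ?data l \<epsilon>"
  then obtain l \<epsilon> where data: "?data l \<epsilon>" by blast
  then have "l = lam_minus (\<epsilon>*p * sinh (2*\<gamma>))" using quadratic_root_eq_lam(2) by blast
  with data show "z \<in> sigma_minus \<gamma> p q ap am" unfolding sigma_minus_def by auto
qed

lemma mem_sigma_union_iff:
  "z \<in> sigma_minus \<gamma> p q ap am \<union> sigma_plus \<gamma> p q ap am \<longleftrightarrow>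
    (\<exists>l \<epsilon>. z = complex_of_real l \<and> l \<noteq> 0 \<and> (\<epsilon> = 1 \<or> \<epsilon> = -1)
       \<and> l^2 - 2*(\<epsilon>*p * sinh (2*\<gamma>))*l - 1 = 0
       \<and> \<epsilon>*am < \<epsilon> * sgn l * p_gamma' \<gamma> p q \<and> \<epsilon> * sgn l * p_gamma' \<gamma> p q < \<epsilon>*ap)"
proof -
  have "(l > 0 \<and> \<epsilon>*am < \<epsilon>*P \<and> \<epsilon>*P < \<epsilon>*ap) \<or> (l < 0 \<and> \<epsilon>*am < - \<epsilon>*P \<and> - \<epsilon>*P < \<epsilon>*ap)
    \<longleftrightarrow> l \<noteq> 0 \<and> \<epsilon>*am < \<epsilon> * sgn l * P \<and> \<epsilon> * sgn l * P < \<epsilon>*ap" for l \<epsilon> P :: real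
    by (cases l "0::real" rule: linorder_cases) auto
  then show ?thesis unfolding Un_iff mem_sigma_plus_iff mem_sigma_minus_iff by blast
qed

section \<open>The quadratic form of the recurrence\<close>

text \<open>\<open>c\<close>, \<open>c'\<close> and \<open>cq\<close> stand for \<open>e\<^sup>2\<^sup>\<gamma>\<close>, \<open>e\<^sup>-\<^sup>2\<^sup>\<gamma>\<close> and
  \<open>cnj q\<close>, kept as independent variables so that the identities below are ring identities.\<close>

definition eigen_form :: "complex \<Rightarrow> complex \<Rightarrow> complex \<Rightarrow> complex \<Rightarrow> complex \<Rightarrow> complex
    \<Rightarrow> complex \<Rightarrow> complex \<Rightarrow> complex \<Rightarrow> complex" where
  "eigen_form c c' z p q cq a X Y =
     z*cq*(c'*a - z*p)*X^2 + (1 - z*p*a*(c+c') + z^2*(p^2 - q*cq))*X*Y - z*q*(c*a - z*p)*Y^2"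

lemma eigen_form_wronskian_left:
  fixes c c' z p q cq a b cb X Y Z V :: complex
  assumes "c' * a * X + cb * Z = z * (p * X + q * Y)"
    and "b * X - c * a * Z = z * (cq * V - p * Z)"
    and "b * cb = 1 - a^2" "c * c' = 1"
  shows "z * cq * cb * (V * Y - Z * X) = eigen_form c c' z p q cq a X Y"
  using assms unfolding eigen_form_def by algebra

lemma eigen_form_wronskian_right:
  fixes c c' z p q cq a b cb X Y X' Y' :: complex
  assumes "c' * a * X' + cb * Y = z * (p * X' + q * Y')"
    and "b * X' - c * a * Y = z * (cq * X - p * Y)"
    and "b * cb = 1 - a^2" "c * c' = 1"
  shows "z * q * b * (X * Y' - Y * X') = eigen_form c c' z p q cq a X Y"
  using assms unfolding eigen_form_def by algebra

lemma eigen_form_ratio: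
  fixes c c' z p q cq a b cb r m :: complex
  assumes "b * m = z * cq + (c * a - z * p) * r" "b * cb = 1 - a^2" "c * c' = 1"
  shows "b * ((c' * a - z * p) * m + cb * r - z * q * r * m) = eigen_form c c' z p q cq a 1 r"
proof -
  have "b * ((c' * a - z * p) * m + cb * r - z * q * r * m)
      = (c' * a - z * p) * (b * m) + (b * cb) * r - z * q * r * (b * m)"
    by (simp add: algebra_simps)
  also have "\<dots> = eigen_form c c' z p q cq a 1 r"
    unfolding assms(1) eigen_form_def power_one mult_1_right using assms(2,3) by algebra
  finally show ?thesis .
qed

lemma eigen_form_affine:
  fixes c c' z p q cq a r :: complex
  shows "eigen_form c c' z p q cq a 1 r
    = ((1 + z^2*(p^2 - q*cq))*r + z^2*p*q*r^2 - z^2*cq*p) + a * (z*cq*c' - z*p*(c+c')*r - z*q*c*r^2)"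
  unfolding eigen_form_def power_one mult_1_right by algebra

lemma eigen_form_coefficients_factor:
  fixes z C P K s :: complex
  assumes "C^2 * s^2 + P*(C^2+1) * s - K = 0"
    and "(1 + z^2*(P^2 - K)) * s + z^2*P * s^2 - z^2*K*P = 0"
  shows "(z*(P * s - K) - C * s) * (z*(P * s - K) + C * s) = 0"
proof -
  have a: "P * s - K = (- (C^2)) * s * (s + P)"
    using assms(1) by (simp add: algebra_simps power2_eq_square)
  have b: "z^2*(P * s - K)*(s + P) = - s"
    using assms(2) by (simp add: algebra_simps power2_eq_square)
  have "(z*(P * s - K) - C * s) * (z*(P * s - K) + C * s) = z^2*(P * s - K)*(P * s - K) - C^2 * s^2"
    by (simp add: algebra_simps power2_eq_square)
  also have "\<dots> = (z^2*(P * s - K)*(s + P)) * ((- (C^2)) * s) - C^2 * s^2"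
    by (subst (2) a) (simp add: algebra_simps)
  also have "\<dots> = 0" unfolding b by (simp add: power2_eq_square)
  finally show ?thesis .
qed

section \<open>The two-phase walk and its geometric eigenvectors\<close>

locale two_phase_walk =
  fixes \<gamma> p ap am :: real and q bp bm :: complex
  assumes p_lo: "-1 < p" and p_hi: "p < 1" and pq: "p^2 + (cmod q)^2 = 1"
    and ap_lo: "-1 < ap" and ap_hi: "ap < 1" and am_lo: "-1 < am" and am_hi: "am < 1"
    and abp: "ap^2 + (cmod bp)^2 = 1" and abm: "am^2 + (cmod bm)^2 = 1"
begin

abbreviation "aa \<equiv> two_phase ap am"
abbreviation "bb \<equiv> two_phase bp bm"
definition "c = exp (2*\<gamma>)"
definition "k = 1 - p^2"
definition "C = complex_of_real c"
definition "C' = complex_of_real (exp (-2*\<gamma>))"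
definition "P = complex_of_real p"
definition "K = complex_of_real k"

definition eigen_equations :: "complex \<Rightarrow> (int \<Rightarrow> complex \<times> complex) \<Rightarrow> bool" where
  "eigen_equations z \<Psi> \<longleftrightarrow> (\<forall>x.
     C' * complex_of_real (aa x) * fst (\<Psi> x) + cnj (bb x) * snd (\<Psi> x) = z * (P * fst (\<Psi> x) + q * snd (\<Psi> (x+1))) \<and>
     bb x * fst (\<Psi> x) - C * complex_of_real (aa x) * snd (\<Psi> x) = z * (cnj q * fst (\<Psi> (x-1)) - P * snd (\<Psi> x)))"

lemma walk_op_eigen_iff_eigen_equations:
  "walk_op \<gamma> p q aa bb \<Psi> = (\<lambda>x. (z * fst (\<Psi> x), z * snd (\<Psi> x))) \<longleftrightarrow> eigen_equations z \<Psi>"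
  unfolding walk_op_eigen_iff[OF pq]
  by (simp add: eigen_equations_def coin_op_def shift_op_def fun_eq_iff C_def C'_def P_def c_def mult.assoc)

lemma c_pos: "c > 0" unfolding c_def by simp
lemma k_pos: "k > 0" unfolding k_def using p_lo p_hi by (simp add: abs_square_less_1)
lemma C_C': "C * C' = 1" unfolding C_def C'_def c_def by (simp add: exp_add[symmetric] flip: of_real_mult)
lemma C_nz: "C \<noteq> 0" unfolding C_def using c_pos by simp

lemma q_cnj: "q * cnj q = K"
proof -
  have "(cmod q)^2 = k" using pq unfolding k_def by simp
  then show ?thesis using complex_norm_square[of q] unfolding K_def by simp
qed

lemma q_nz: "q \<noteq> 0" using q_cnj k_pos unfolding K_def by auto
lemma norm_q: "cmod q = sqrt k" using pq unfolding k_def by (simp add: real_sqrt_unique[symmetric])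

lemma aa_pos: "x \<ge> 0 \<Longrightarrow> aa x = ap" and aa_neg: "x < 0 \<Longrightarrow> aa x = am"
  and bb_pos: "x \<ge> 0 \<Longrightarrow> bb x = bp" and bb_neg: "x < 0 \<Longrightarrow> bb x = bm"
  unfolding two_phase_def by auto

lemma norm_bb: "(cmod (bb x))^2 = 1 - (aa x)^2" using abp abm unfolding two_phase_def by auto

lemma bb_cnj: "bb x * cnj (bb x) = 1 - (complex_of_real (aa x))^2"
  using complex_norm_square[of "bb x"] norm_bb[of x] by simp

lemma bb_nz: "bb x \<noteq> 0"
proof -
  have "-1 < aa x" "aa x < 1" using ap_lo ap_hi am_lo am_hi unfolding two_phase_def by auto
  then have "(aa x)^2 < 1" by (simp add: abs_square_less_1)
  then show ?thesis using norm_bb[of x] by auto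
qed

lemma norm_bp_eq_norm_bm: "ap = am \<Longrightarrow> cmod bp = cmod bm"
  using abp abm by (metis add_left_cancel norm_ge_zero power2_eq_iff_nonneg)

text \<open>If \<open>f2 (x+1) = r f1 x\<close> throughout, the second eigen-equation makes \<open>f1\<close> geometric with this ratio
  at sites with coin parameters \<open>a\<close>, \<open>b\<close>.\<close>

definition growth_ratio :: "complex \<Rightarrow> complex \<Rightarrow> real \<Rightarrow> complex \<Rightarrow> complex" where
  "growth_ratio z r a b = (z * cnj q + (C * complex_of_real a - z * P) * r) / b"

definition const_coeff :: "complex \<Rightarrow> complex \<Rightarrow> complex" where
  "const_coeff z r = (1 + z^2*(P^2 - q*cnj q))*r + z^2*P*q*r^2 - z^2*cnj q*P"

definition lin_coeff :: "complex \<Rightarrow> complex \<Rightarrow> complex" where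
  "lin_coeff z r = z*cnj q*C' - z*P*(C+C')*r - z*q*C*r^2"

lemma eigen_form_eq_coeffs:
  "eigen_form C C' z P q (cnj q) a 1 r = const_coeff z r + a * lin_coeff z r"
  unfolding const_coeff_def lin_coeff_def by (rule eigen_form_affine)

lemma lin_coeff_scaled: "q * C * lin_coeff z r = z * (K - P*(C^2+1)*(q*r) - C^2*(q*r)^2)"
proof -
  have "q * C * lin_coeff z r = z * ((q * cnj q) * (C * C') - P*(C^2 + C*C')*(q*r) - C^2*(q*r)^2)"
    unfolding lin_coeff_def by (simp add: power2_eq_square algebra_simps)
  then show ?thesis unfolding q_cnj C_C' by simp
qed

lemma const_coeff_scaled:
  "q * const_coeff z r = (1 + z^2*(P^2 - K))*(q*r) + z^2*P*(q*r)^2 - z^2*K*P"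
  unfolding const_coeff_def q_cnj[symmetric] by (simp add: power2_eq_square algebra_simps)

lemma cosh_eq: "cosh (2*\<gamma>) = (c + 1/c)/2" and sinh_eq: "sinh (2*\<gamma>) = (c - 1/c)/2"
  unfolding cosh_field_def sinh_field_def c_def by (simp_all add: exp_minus inverse_eq_divide)

lemma p_gamma'_eq: "p_gamma' \<gamma> p q = p * ((c + 1/c)/2) / sqrt (p^2 * ((c + 1/c)/2)^2 + (1-p^2))"
proof -
  define ch where "ch = cosh (2*\<gamma>)"
  have ch: "ch > 0" unfolding ch_def by simp
  have "p^2 + (cmod q)^2 / ch^2 = (p^2 * ch^2 + (1-p^2)) / ch^2" using ch pq by (simp add: field_simps)
  then have "sqrt (p^2 + (cmod q)^2 / ch^2) = sqrt (p^2 * ch^2 + (1-p^2)) / ch"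
    using ch by (simp add: real_sqrt_divide)
  then have "p_gamma' \<gamma> p q = p * ch / sqrt (p^2 * ch^2 + (1-p^2))"
    unfolding p_gamma'_def ch_def using ch by simp
  then show ?thesis unfolding ch_def cosh_eq .
qed

lemma sinh_eigenvalue_equation_iff:
  "l^2 - 2*(\<epsilon>*p * sinh (2*\<gamma>))*l - 1 = 0 \<longleftrightarrow> l^2 - 1 = \<epsilon> * l * p * (c - 1/c)"
proof -
  have "2*(\<epsilon>*p*((c - 1/c)/2))*l = \<epsilon> * l * p * (c - 1/c)" by simp
  then show ?thesis unfolding sinh_eq by linarith
qed

lemma lin_coeff_zero_imp_real_root:
  assumes "z \<noteq> 0" "lin_coeff z r = 0"
  obtains \<sigma> where "q * r = complex_of_real \<sigma>" "c^2*\<sigma>^2 + p*(c^2+1)*\<sigma> - (1 - p^2) = 0"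
proof -
  have "K - P*(C^2+1)*(q*r) - C^2*(q*r)^2 = 0"
    using lin_coeff_scaled[of z r] assms by simp
  then have root: "complex_of_real (c^2) * (q*r)^2 + complex_of_real (p*(c^2+1)) * (q*r) + complex_of_real (-k) = 0"
    unfolding K_def P_def C_def by (simp add: algebra_simps)
  have "c^2 \<noteq> 0" using c_pos by simp
  moreover have "(p*(c^2+1))^2 - 4*c^2*(-k) \<ge> 0" using k_pos by (simp add: add_nonneg_nonneg)
  ultimately obtain \<sigma> where \<sigma>: "q * r = complex_of_real \<sigma>"
    using real_quadratic_root_is_real[OF _ root] by blast
  have "complex_of_real (c^2*\<sigma>^2 + p*(c^2+1)*\<sigma> - k) = 0"
    using root unfolding \<sigma> by (simp add: algebra_simps)
  then show ?thesis using that[OF \<sigma>] unfolding k_def by (simp only: of_real_eq_0_iff)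
qed

lemma coefficients_zero_imp_spectral_data:
  assumes z: "z \<noteq> 0" and lin: "lin_coeff z r = 0" and const: "const_coeff z r = 0"
  obtains \<sigma> l \<epsilon> where "r = complex_of_real \<sigma> / q" "z = complex_of_real l" "l \<noteq> 0" "\<epsilon> = 1 \<or> \<epsilon> = -1"
    "l * (p*\<sigma> - (1 - p^2)) = \<epsilon> * c * \<sigma>" "c^2*\<sigma>^2 + p*(c^2+1)*\<sigma> - (1 - p^2) = 0"
proof -
  obtain \<sigma> where \<sigma>: "q * r = complex_of_real \<sigma>" and root: "c^2*\<sigma>^2 + p*(c^2+1)*\<sigma> - (1 - p^2) = 0"
    using lin_coeff_zero_imp_real_root[OF z lin] .
  have "K - P*(C^2+1)*(q*r) - C^2*(q*r)^2 = 0"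
    using lin_coeff_scaled[of z r] z lin by simp
  moreover have "C^2 * (q*r)^2 + P*(C^2+1) * (q*r) - K = - (K - P*(C^2+1)*(q*r) - C^2*(q*r)^2)"
    by (simp add: algebra_simps)
  ultimately have "C^2 * (q*r)^2 + P*(C^2+1) * (q*r) - K = 0" by simp
  from eigen_form_coefficients_factor[OF this] const const_coeff_scaled[of z r]
  have "(z*(P*(q*r) - K) - C*(q*r)) * (z*(P*(q*r) - K) + C*(q*r)) = 0" by simp
  then consider "z*(P*(q*r) - K) = C*(q*r)" | "z*(P*(q*r) - K) = - (C*(q*r))"
    by (auto simp only: mult_eq_0_iff right_minus_eq eq_neg_iff_add_eq_0)
  then obtain \<epsilon> :: real where eps: "\<epsilon> = 1 \<or> \<epsilon> = -1"
    and "z*(P*(q*r) - K) = complex_of_real \<epsilon> * (C*(q*r))"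
  proof cases
    case 1 then show ?thesis using that[of 1] by simp
  next
    case 2 then show ?thesis using that[of "-1"] by simp
  qed
  moreover have "P*(q*r) - K = complex_of_real (p*\<sigma> - (1 - p^2))" "C*(q*r) = complex_of_real (c*\<sigma>)"
    unfolding \<sigma> P_def K_def k_def C_def by simp_all
  ultimately have z_eq: "z * complex_of_real (p*\<sigma> - (1 - p^2)) = complex_of_real (\<epsilon> * c * \<sigma>)"
    by (simp only: of_real_mult mult.assoc)
  define l where "l = \<epsilon> * c * \<sigma> / (p*\<sigma> - (1 - p^2))"
  have neg: "p*\<sigma> - (1 - p^2) < 0" by (rule spectral_root_bound[OF c_pos p_lo p_hi root])
  then have "complex_of_real (p*\<sigma> - (1 - p^2)) \<noteq> 0" by (simp only: of_real_eq_0_iff)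
  then have zl: "z = complex_of_real l"
    using z_eq unfolding l_def of_real_divide by (simp add: nonzero_eq_divide_eq)
  show ?thesis
  proof (rule that[OF _ zl _ eps _ root])
    show "r = complex_of_real \<sigma> / q" using \<sigma> q_nz by (simp add: field_simps)
    show "l \<noteq> 0" using zl z by auto
    show "l * (p*\<sigma> - (1 - p^2)) = \<epsilon> * c * \<sigma>" unfolding l_def using neg by simp
  qed
qed

lemma spectral_data_imp_coefficients_zero:
  assumes z: "z = complex_of_real l" and r: "r = complex_of_real \<sigma> / q" and eps: "\<epsilon> = 1 \<or> \<epsilon> = -1"
    and rel: "l * (p*\<sigma> - (1 - p^2)) = \<epsilon> * c * \<sigma>"
    and root: "c^2*\<sigma>^2 + p*(c^2+1)*\<sigma> - (1 - p^2) = 0"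
  shows "lin_coeff z r = 0" "const_coeff z r = 0"
proof -
  have qr: "q * r = complex_of_real \<sigma>" using r q_nz by simp
  have "K - P*(C^2+1)*(q*r) - C^2*(q*r)^2 = complex_of_real ((1-p^2) - p*(c^2+1)*\<sigma> - c^2*\<sigma>^2)"
    unfolding qr by (simp add: K_def k_def P_def C_def)
  also have "\<dots> = 0" using root by (simp only: of_real_eq_0_iff)
  finally have "q * C * lin_coeff z r = 0" unfolding lin_coeff_scaled by simp
  then show "lin_coeff z r = 0" using q_nz C_nz by simp
  have "q * const_coeff z r = complex_of_real (l^2 * (p*\<sigma> - (1 - p^2)) * (\<sigma> + p) + \<sigma>)"
    unfolding const_coeff_scaled qr K_def k_def P_def z by (simp add: power2_eq_square algebra_simps)
  then show "const_coeff z r = 0"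
    using spectral_second_equation[OF c_pos p_lo p_hi eps rel root] q_nz by simp
qed

lemma norm_growth_ratio:
  assumes z: "z = complex_of_real l" and r: "r = complex_of_real \<sigma> / q"
    and b: "(cmod b)^2 = 1 - a^2"
  shows "cmod (growth_ratio z r a b) = \<bar>l*(1-p^2) + (c*a - l*p)*\<sigma>\<bar> / (sqrt (1-p^2) * sqrt (1 - a^2))"
proof -
  define E where "E = l*(1-p^2) + (c*a - l*p)*\<sigma>"
  have "q * (z * cnj q + (C * complex_of_real a - z * P) * r)
      = z * (q * cnj q) + (C * complex_of_real a - z * P) * complex_of_real \<sigma>"
    unfolding r using q_nz by (simp add: field_simps)
  also have "\<dots> = complex_of_real E"
    unfolding q_cnj z K_def k_def C_def P_def E_def by (simp add: algebra_simps)
  finally have "z * cnj q + (C * complex_of_real a - z * P) * r = complex_of_real E / q"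
    using q_nz by (simp add: nonzero_eq_divide_eq ac_simps)
  then have "growth_ratio z r a b = complex_of_real E / (q * b)"
    unfolding growth_ratio_def by simp
  moreover have "cmod q = sqrt (1-p^2)" using norm_q unfolding k_def .
  moreover have "cmod b = sqrt (1 - a^2)" using b by (simp add: real_sqrt_unique[symmetric])
  ultimately have "cmod (growth_ratio z r a b) = \<bar>E\<bar> / (sqrt (1-p^2) * sqrt (1 - a^2))"
    by (simp add: norm_divide norm_mult)
  then show ?thesis unfolding E_def .
qed

lemma norm_growth_ratio_compare_1:
  assumes "z = complex_of_real l" "r = complex_of_real \<sigma> / q" "(cmod b)^2 = 1 - a^2" "-1 < a" "a < 1"
  shows "cmod (growth_ratio z r a b) < 1 \<longleftrightarrow> (l*(1-p^2) + (c*a - l*p)*\<sigma>)^2 < (1-p^2)*(1-a^2)"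
    and "cmod (growth_ratio z r a b) > 1 \<longleftrightarrow> (l*(1-p^2) + (c*a - l*p)*\<sigma>)^2 > (1-p^2)*(1-a^2)"
proof -
  have "(1-p^2)*(1-a^2) > 0" using k_pos assms(4,5) unfolding k_def by (simp add: abs_square_less_1)
  then have pos: "sqrt ((1-p^2)*(1-a^2)) > 0" by simp
  have norm_eq: "cmod (growth_ratio z r a b) = sqrt ((l*(1-p^2) + (c*a - l*p)*\<sigma>)^2) / sqrt ((1-p^2)*(1-a^2))"
    unfolding norm_growth_ratio[OF assms(1-3)] by (simp add: real_sqrt_mult)
  show "cmod (growth_ratio z r a b) < 1 \<longleftrightarrow> (l*(1-p^2) + (c*a - l*p)*\<sigma>)^2 < (1-p^2)*(1-a^2)"
    unfolding norm_eq divide_less_eq_1_pos[OF pos] real_sqrt_less_iff ..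
  show "cmod (growth_ratio z r a b) > 1 \<longleftrightarrow> (l*(1-p^2) + (c*a - l*p)*\<sigma>)^2 > (1-p^2)*(1-a^2)"
    unfolding norm_eq less_divide_eq_1_pos[OF pos] real_sqrt_less_iff ..
qed

lemma decay_discriminant_sign_iff:
  assumes l0: "l \<noteq> 0" and eps: "\<epsilon> = 1 \<or> \<epsilon> = -1"
    and rel: "l * (p*\<sigma> - (1 - p^2)) = \<epsilon> * c * \<sigma>"
    and root: "c^2*\<sigma>^2 + p*(c^2+1)*\<sigma> - (1 - p^2) = 0"
    and a: "-1 < a" "a < 1"
  shows "(l*(1-p^2) + (c*a - l*p)*\<sigma>)^2 < (1-p^2)*(1-a^2) \<longleftrightarrow> \<epsilon>*a > \<epsilon> * sgn l * p_gamma' \<gamma> p q"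
    and "(l*(1-p^2) + (c*a - l*p)*\<sigma>)^2 > (1-p^2)*(1-a^2) \<longleftrightarrow> \<epsilon>*a < \<epsilon> * sgn l * p_gamma' \<gamma> p q"
proof -
  define t where "t = \<epsilon> * sgn l * p_gamma' \<gamma> p q"
  define M where "M = c^2*\<sigma>^2 + (1-p^2)"
  have sg: "\<sigma> \<noteq> 0" "sgn \<sigma> = - \<epsilon> * sgn l"
    using spectral_root_sign[OF c_pos p_lo p_hi eps l0 rel root] by auto
  have N: "c^2*\<sigma>^2 - (1-p^2) = t * M"
    using spectral_root_p_gamma[OF c_pos p_lo p_hi sg(1) root]
    unfolding p_gamma'_eq sg(2) t_def M_def by simp
  have F: "(l*(1-p^2) + (c*a - l*p)*\<sigma>)^2 - (1-p^2)*(1-a^2)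
      = (1 - \<epsilon>*a) * ((c^2*\<sigma>^2 - (1-p^2)) - \<epsilon>*a*(c^2*\<sigma>^2 + (1-p^2)))"
    by (rule decay_discriminant_factorisation[OF eps rel])
  also have "\<dots> = (1 - \<epsilon>*a) * ((t - \<epsilon>*a) * M)"
    unfolding N M_def[symmetric] by (simp add: algebra_simps)
  finally have F: "(l*(1-p^2) + (c*a - l*p)*\<sigma>)^2 - (1-p^2)*(1-a^2) = (1 - \<epsilon>*a) * ((t - \<epsilon>*a) * M)" .
  have "M > 0" unfolding M_def using k_pos unfolding k_def by (simp add: add_nonneg_pos)
  moreover have "1 - \<epsilon>*a > 0" using eps a by auto
  ultimately have "(1 - \<epsilon>*a) * ((t - \<epsilon>*a) * M) < 0 \<longleftrightarrow> t < \<epsilon>*a"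
    and "(1 - \<epsilon>*a) * ((t - \<epsilon>*a) * M) > 0 \<longleftrightarrow> t > \<epsilon>*a"
    by (simp_all add: mult_less_0_iff zero_less_mult_iff)
  with F show "(l*(1-p^2) + (c*a - l*p)*\<sigma>)^2 < (1-p^2)*(1-a^2) \<longleftrightarrow> \<epsilon>*a > \<epsilon> * sgn l * p_gamma' \<gamma> p q"
    and "(l*(1-p^2) + (c*a - l*p)*\<sigma>)^2 > (1-p^2)*(1-a^2) \<longleftrightarrow> \<epsilon>*a < \<epsilon> * sgn l * p_gamma' \<gamma> p q"
    unfolding t_def by linarith+
qed

lemma eigenvector_of_coefficients_zero:
  assumes coeffs: "lin_coeff z r = 0" "const_coeff z r = 0"
    and decay: "cmod (growth_ratio z r ap bp) < 1" "cmod (growth_ratio z r am bm) > 1"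
  shows "\<exists>\<Psi>\<in>ell2Z2. \<Psi> \<noteq> (\<lambda>_. (0, 0)) \<and> eigen_equations z \<Psi>"
proof -
  define \<nu> where "\<nu> = two_sided_geometric (growth_ratio z r ap bp) (growth_ratio z r am bm)"
  define \<Psi> where "\<Psi> x = (\<nu> (x+1), r * \<nu> x)" for x
  have "growth_ratio z r am bm \<noteq> 0" using decay(2) by auto
  then have step: "\<nu> (x+1) = growth_ratio z r (aa x) (bb x) * \<nu> x" for x
    unfolding \<nu>_def two_sided_geometric_step[OF \<open>growth_ratio z r am bm \<noteq> 0\<close>]
    by (simp add: two_phase_def)
  have "eigen_equations z \<Psi>"
    unfolding eigen_equations_def
  proof (intro allI conjI)
    fix x
    let ?m = "growth_ratio z r (aa x) (bb x)"
    have bm: "bb x * ?m = z * cnj q + (C * complex_of_real (aa x) - z * P) * r"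
      unfolding growth_ratio_def using bb_nz[of x] by simp
    have "bb x * ((C' * complex_of_real (aa x) - z * P) * ?m + cnj (bb x) * r - z * q * r * ?m) = 0"
      unfolding eigen_form_ratio[where q = q, OF bm bb_cnj C_C'] eigen_form_eq_coeffs coeffs by simp
    then have "\<nu> x * ((C' * complex_of_real (aa x) - z * P) * ?m + cnj (bb x) * r - z * q * r * ?m) = 0"
      using bb_nz[of x] by simp
    then show "C' * complex_of_real (aa x) * fst (\<Psi> x) + cnj (bb x) * snd (\<Psi> x) = z * (P * fst (\<Psi> x) + q * snd (\<Psi> (x + 1)))"
      unfolding \<Psi>_def step by (simp add: algebra_simps)
    have "bb x * fst (\<Psi> x) - C * complex_of_real (aa x) * snd (\<Psi> x)
        = (bb x * ?m) * \<nu> x - C * complex_of_real (aa x) * (r * \<nu> x)"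
      unfolding \<Psi>_def step by (simp add: mult.assoc)
    also have "\<dots> = z * (cnj q * fst (\<Psi> (x - 1)) - P * snd (\<Psi> x))"
      unfolding bm \<Psi>_def by (simp add: algebra_simps)
    finally show "bb x * fst (\<Psi> x) - C * complex_of_real (aa x) * snd (\<Psi> x) = z * (cnj q * fst (\<Psi> (x - 1)) - P * snd (\<Psi> x))" .
  qed
  moreover have "fst (\<Psi> (-1)) = 1" unfolding \<Psi>_def \<nu>_def two_sided_geometric_def by simp
  then have "\<Psi> \<noteq> (\<lambda>_. (0, 0))" by auto
  moreover have "\<Psi> \<in> ell2Z2"
    unfolding \<Psi>_def \<nu>_def by (intro shifted_pair_in_ell2Z2 two_sided_geometric_square_summable decay)
  ultimately show ?thesis by blast
qed

lemma eigenvector_of_sigma: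
  assumes "z \<in> sigma_minus \<gamma> p q ap am \<union> sigma_plus \<gamma> p q ap am"
  shows "\<exists>\<Psi>\<in>ell2Z2. \<Psi> \<noteq> (\<lambda>_. (0, 0)) \<and> eigen_equations z \<Psi>"
proof -
  obtain l \<epsilon> where z: "z = complex_of_real l" and "l \<noteq> 0" and eps: "\<epsilon> = 1 \<or> \<epsilon> = -1"
    and eigen: "l^2 - 2*(\<epsilon>*p * sinh (2*\<gamma>))*l - 1 = 0"
    and am: "\<epsilon>*am < \<epsilon> * sgn l * p_gamma' \<gamma> p q" and ap: "\<epsilon> * sgn l * p_gamma' \<gamma> p q < \<epsilon>*ap"
    using assms unfolding mem_sigma_union_iff by blast
  define \<sigma> where "\<sigma> = l * (1 - p^2) / (l*p - \<epsilon>*c)"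
  define r where "r = complex_of_real \<sigma> / q"
  have "l^2 - 1 = \<epsilon> * l * p * (c - 1/c)" using eigen sinh_eigenvalue_equation_iff by simp
  note spectral = spectral_root_from_eigenvalue[OF c_pos p_lo p_hi eps \<open>l \<noteq> 0\<close> this, folded \<sigma>_def]
  have "(cmod bp)^2 = 1 - ap^2" "(cmod bm)^2 = 1 - am^2" using abp abm by simp_all
  note compare = norm_growth_ratio_compare_1[OF z r_def] decay_discriminant_sign_iff[OF \<open>l \<noteq> 0\<close> eps spectral]
  show ?thesis
  proof (rule eigenvector_of_coefficients_zero)
    show "lin_coeff z r = 0" "const_coeff z r = 0"
      by (rule spectral_data_imp_coefficients_zero[OF z r_def eps spectral])+
    show "cmod (growth_ratio z r ap bp) < 1"
      using ap compare(1)[OF \<open>(cmod bp)^2 = _\<close> ap_lo ap_hi] compare(3)[OF ap_lo ap_hi] by simp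
    show "cmod (growth_ratio z r am bm) > 1"
      using am compare(2)[OF \<open>(cmod bm)^2 = _\<close> am_lo am_hi] compare(4)[OF am_lo am_hi] by simp
  qed
qed

end

section \<open>Solutions of the eigenvalue equation\<close>

locale eigen_solution = two_phase_walk +
  fixes z :: complex and \<Psi> :: "int \<Rightarrow> complex \<times> complex"
  assumes eigen: "eigen_equations z \<Psi>"
begin

abbreviation "f1 x \<equiv> fst (\<Psi> x)"
abbreviation "f2 x \<equiv> snd (\<Psi> x)"

lemma E1: "C' * complex_of_real (aa x) * f1 x + cnj (bb x) * f2 x = z * (P * f1 x + q * f2 (x+1))"
  and E2: "bb x * f1 x - C * complex_of_real (aa x) * f2 x = z * (cnj q * f1 (x-1) - P * f2 x)"
  using eigen unfolding eigen_equations_def by auto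

lemma zero_eigenvalue_imp_zero:
  assumes "z = 0"
  shows "\<Psi> x = (0, 0)"
proof -
  have e1: "C' * complex_of_real (aa x) * f1 x + cnj (bb x) * f2 x = 0" using E1[of x] assms by simp
  have e2: "bb x * f1 x - C * complex_of_real (aa x) * f2 x = 0" using E2[of x] assms by simp
  have "f1 x = C * complex_of_real (aa x) * (C' * complex_of_real (aa x) * f1 x + cnj (bb x) * f2 x)
          + cnj (bb x) * (bb x * f1 x - C * complex_of_real (aa x) * f2 x)"
    using bb_cnj[of x] C_C' by algebra
  then have "f1 x = 0" using e1 e2 by simp
  moreover from this have "f2 x = 0" using e1 bb_nz[of x] by simp
  ultimately show ?thesis by (simp add: prod_eq_iff)
qed

lemma vanishing_pair_step_up:
  assumes "z \<noteq> 0" "f1 x = 0" "f2 (x+1) = 0"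
  shows "f1 (x+1) = 0 \<and> f2 (x+1+1) = 0"
proof -
  have "bb (x+1) * f1 (x+1) = 0" using E2[of "x+1"] assms by simp
  then have "f1 (x+1) = 0" using bb_nz by simp
  moreover from this have "z * q * f2 (x+1+1) = 0" using E1[of "x+1"] assms by (simp add: algebra_simps)
  ultimately show ?thesis using assms(1) q_nz by simp
qed

lemma vanishing_pair_step_down:
  assumes "z \<noteq> 0" "f1 x = 0" "f2 (x+1) = 0"
  shows "f1 (x-1) = 0 \<and> f2 (x-1+1) = 0"
proof -
  have "cnj (bb x) * f2 x = 0" using E1[of x] assms by simp
  then have "f2 x = 0" using bb_nz by simp
  moreover from this have "z * cnj q * f1 (x-1) = 0" using E2[of x] assms by (simp add: algebra_simps)
  ultimately show ?thesis using assms(1) q_nz by simp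
qed

lemma vanishing_pair_imp_zero:
  assumes "z \<noteq> 0" "f1 x0 = 0" "f2 (x0+1) = 0"
  shows "\<Psi> = (\<lambda>_. (0, 0))"
proof -
  have "f1 x = 0 \<and> f2 (x+1) = 0" for x
  proof (induction x rule: int_induct[where k = x0])
    case base then show ?case using assms by simp
  next
    case (step1 i) then show ?case using vanishing_pair_step_up[OF assms(1)] by blast
  next
    case (step2 i) then show ?case using vanishing_pair_step_down[OF assms(1)] by blast
  qed
  then show ?thesis by (metis diff_add_cancel prod.collapse)
qed

definition wronskian :: "int \<Rightarrow> complex" where
  "wronskian x = f1 (x-1) * f2 (x+1) - f2 x * f1 x"

lemma wronskian_eigen_form_left:
  "z * cnj q * cnj (bb x) * wronskian x
     = eigen_form C C' z P q (cnj q) (complex_of_real (aa x)) (f1 x) (f2 (x+1))"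
  unfolding wronskian_def by (rule eigen_form_wronskian_left[OF E1 E2 bb_cnj C_C'])

lemma wronskian_eigen_form_right:
  "z * q * bb (x+1) * wronskian (x+1)
     = eigen_form C C' z P q (cnj q) (complex_of_real (aa (x+1))) (f1 x) (f2 (x+1))"
proof -
  have "bb (x+1) * f1 (x+1) - C * complex_of_real (aa (x+1)) * f2 (x+1) = z * (cnj q * f1 x - P * f2 (x+1))"
    using E2[of "x+1"] by simp
  from eigen_form_wronskian_right[OF E1[of "x+1"] this bb_cnj C_C']
  show ?thesis unfolding wronskian_def by simp
qed

text \<open>Where the coin is constant, the two identities above compare \<open>wronskian\<close> at neighbouring sites.\<close>

lemma norm_wronskian_step:
  assumes "z \<noteq> 0" "aa (x+1) = aa x" "bb (x+1) = bb x"
  shows "cmod (wronskian (x+1)) = cmod (wronskian x)"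
proof -
  have "z * q * bb x * wronskian (x+1) = z * cnj q * cnj (bb x) * wronskian x"
    using wronskian_eigen_form_left[of x] wronskian_eigen_form_right[of x] assms by simp
  then have "cmod z * cmod q * cmod (bb x) * cmod (wronskian (x+1)) = cmod z * cmod q * cmod (bb x) * cmod (wronskian x)"
    by (metis complex_mod_cnj norm_mult)
  moreover have "cmod z * cmod q * cmod (bb x) \<noteq> 0" using assms(1) q_nz bb_nz by simp
  ultimately show ?thesis by simp
qed

lemma norm_wronskian_nonneg_const:
  assumes "z \<noteq> 0"
  shows "cmod (wronskian (int n)) = cmod (wronskian 0)"
proof (induction n)
  case (Suc n)
  have "cmod (wronskian (int n + 1)) = cmod (wronskian (int n))"
    by (rule norm_wronskian_step[OF assms]) (simp_all add: aa_pos bb_pos)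
  with Suc.IH show ?case by (simp add: add.commute)
qed simp

lemma norm_wronskian_neg_const:
  assumes "z \<noteq> 0"
  shows "cmod (wronskian (-1 - int n)) = cmod (wronskian (-1))"
proof (induction n)
  case (Suc n)
  have "cmod (wronskian ((-2 - int n) + 1)) = cmod (wronskian (-2 - int n))"
    by (rule norm_wronskian_step[OF assms]) (simp_all add: aa_neg bb_neg)
  with Suc.IH show ?case by simp
qed simp

end

locale decaying_eigen_solution = eigen_solution +
  assumes square_summable: "\<Psi> \<in> ell2Z2"
    and nontrivial: "\<Psi> \<noteq> (\<lambda>_. (0, 0))"
begin

lemma z_nz: "z \<noteq> 0"
  using zero_eigenvalue_imp_zero nontrivial by auto

lemma nonvanishing_pair: "f1 x \<noteq> 0 \<or> f2 (x+1) \<noteq> 0"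
  using vanishing_pair_imp_zero[OF z_nz] nontrivial by blast

lemma tendsto_zero_at_top:
  "(\<lambda>n. f1 (int n + x0)) \<longlonglongrightarrow> 0" "(\<lambda>n. f2 (int n + x0)) \<longlonglongrightarrow> 0"
  by (rule ell2Z2_tendsto_zero[OF square_summable]; simp add: inj_def)+

lemma tendsto_zero_at_bot:
  "(\<lambda>n. f1 (x0 - int n)) \<longlonglongrightarrow> 0" "(\<lambda>n. f2 (x0 - int n)) \<longlonglongrightarrow> 0"
  by (rule ell2Z2_tendsto_zero[OF square_summable]; simp add: inj_def)+

lemma wronskian_zero: "wronskian x = 0"
proof -
  have "(\<lambda>n. wronskian (int n)) \<longlonglongrightarrow> 0 * 0 - 0 * 0"
    unfolding wronskian_def using tendsto_zero_at_top[of "-1"] tendsto_zero_at_top[of 1] tendsto_zero_at_top[of 0]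
    by (intro tendsto_intros) (simp_all add: algebra_simps)
  then have W0: "wronskian 0 = 0"
    using tendsto_zero_constant_norm[of "\<lambda>n. wronskian (int n)"] norm_wronskian_nonneg_const[OF z_nz] by simp
  have "(\<lambda>n. wronskian (-1 - int n))
      = (\<lambda>n. f1 (-2 - int n) * f2 (0 - int n) - f2 (-1 - int n) * f1 (-1 - int n))"
  proof -
    have "-1 - int n - 1 = -2 - int n" "-1 - int n + 1 = 0 - int n" for n by simp_all
    then show ?thesis unfolding wronskian_def by (simp only:)
  qed
  moreover have "\<dots> \<longlonglongrightarrow> 0 * 0 - 0 * 0" by (intro tendsto_intros tendsto_zero_at_bot)
  ultimately have "(\<lambda>n. wronskian (-1 - int n)) \<longlonglongrightarrow> 0" by simp
  then have Wm1: "wronskian (-1) = 0"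
    using tendsto_zero_constant_norm[of "\<lambda>n. wronskian (-1 - int n)"] norm_wronskian_neg_const[OF z_nz] by simp
  show ?thesis
  proof (cases "x \<ge> 0")
    case True
    then obtain n where "x = int n" by (metis nonneg_eq_int)
    then show ?thesis using norm_wronskian_nonneg_const[OF z_nz, of n] W0 by simp
  next
    case False
    then have "x = -1 - int (nat (-1 - x))" by simp
    then show ?thesis using norm_wronskian_neg_const[OF z_nz, of "nat (-1 - x)"] Wm1 by (metis norm_eq_zero)
  qed
qed

lemma f1_zero_propagates:
  assumes "f1 (-1) = 0"
  shows "f1 x = 0 \<and> f2 (x+1) \<noteq> 0"
proof (induction x rule: int_induct[where k = "-1"])
  case base
  then show ?case using assms nonvanishing_pair[of "-1"] by simp
next
  case (step1 i)
  have "f1 i * f2 (i+1+1) = f2 (i+1) * f1 (i+1)" using wronskian_zero[of "i+1"] unfolding wronskian_def by simp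
  then show ?case using step1.IH nonvanishing_pair[of "i+1"] by simp
next
  case (step2 i)
  have "f1 (i-1) * f2 (i+1) = f2 i * f1 i" using wronskian_zero[of i] unfolding wronskian_def by simp
  then show ?case using step2.IH nonvanishing_pair[of "i-1"] by simp
qed

text \<open>If \<open>f1 (-1) = 0\<close> then \<open>f1\<close> vanishes identically, so the second eigen-equation forces \<open>a\<^sub>p = a\<^sub>m\<close>, and \<open>f2\<close>
  would be geometric with ratios of equal modulus on both half-lines.\<close>

lemma f1_minus_one_nz: "f1 (-1) \<noteq> 0"
proof
  assume f1: "f1 (-1) = 0"
  have f2: "f2 x \<noteq> 0" for x using f1_zero_propagates[OF f1, of "x-1"] by simp
  have "C * complex_of_real (aa x) = z * P" for x
  proof -
    have "(C * complex_of_real (aa x) - z * P) * f2 x = 0"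
      using E2[of x] f1_zero_propagates[OF f1, of x] f1_zero_propagates[OF f1, of "x-1"]
      by (simp add: algebra_simps)
    then show ?thesis using f2[of x] by simp
  qed
  from this[of 0] this[of "-1"] have "C * complex_of_real ap = C * complex_of_real am"
    by (simp add: aa_pos aa_neg)
  then have "ap = am" using C_nz by simp
  have step: "f2 (x+1) = (cnj (bb x) / (z * q)) * f2 x" for x
  proof -
    have "cnj (bb x) * f2 x = z * q * f2 (x+1)" using E1[of x] f1_zero_propagates[OF f1, of x] by simp
    then show ?thesis using z_nz q_nz by (simp add: field_simps)
  qed
  have "cmod (cnj bp / (z * q)) < 1"
  proof (rule geometric_tendsto_zero_imp_norm_less_1[of "\<lambda>n. f2 (int n)"])
    show "f2 (int (Suc n)) = cnj bp / (z * q) * f2 (int n)" for n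
      using step[of "int n"] by (simp add: bb_pos add.commute)
    show "(\<lambda>n. f2 (int n)) \<longlonglongrightarrow> 0" using tendsto_zero_at_top(2)[of 0] by simp
  qed (use f2 in simp)
  moreover have "cmod (cnj bm / (z * q)) > 1"
  proof (rule backward_geometric_tendsto_zero_imp_norm_greater_1[of "\<lambda>n. f2 (0 - int n)"])
    show "f2 (0 - int n) = cnj bm / (z * q) * f2 (0 - int (Suc n))" for n
      using step[of "0 - int (Suc n)"] by (simp add: bb_neg)
    show "(\<lambda>n. f2 (0 - int n)) \<longlonglongrightarrow> 0" by (rule tendsto_zero_at_bot(2))
  qed (use f2 in simp)
  ultimately show False using norm_bp_eq_norm_bm[OF \<open>ap = am\<close>] by (simp add: norm_divide)
qed

definition r :: complex where "r = f2 0 / f1 (-1)"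

lemma f2_eq_r_f1: "f2 (x+1) = r * f1 x \<and> f1 x \<noteq> 0"
proof (induction x rule: int_induct[where k = "-1"])
  case base
  then show ?case using f1_minus_one_nz unfolding r_def by simp
next
  case (step1 i)
  have "f1 i * f2 (i+1+1) = f2 (i+1) * f1 (i+1)" using wronskian_zero[of "i+1"] unfolding wronskian_def by simp
  then have "f2 (i+1+1) = r * f1 (i+1)" using step1.IH by (simp add: algebra_simps)
  then show ?case using nonvanishing_pair[of "i+1"] by auto
next
  case (step2 i)
  have "f1 (i-1) * f2 (i+1) = f2 i * f1 i" using wronskian_zero[of i] unfolding wronskian_def by simp
  then have "f2 i = r * f1 (i-1)" using step2.IH by (simp add: algebra_simps)
  then show ?case using nonvanishing_pair[of "i-1"] by auto
qed

lemma f1_step: "f1 x = growth_ratio z r (aa x) (bb x) * f1 (x-1)"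
proof -
  have "bb x * f1 x = (z * cnj q + (C * complex_of_real (aa x) - z * P) * r) * f1 (x-1)"
    using E2[of x] f2_eq_r_f1[of "x-1"] by (simp add: algebra_simps)
  then show ?thesis unfolding growth_ratio_def using bb_nz[of x] by (simp add: field_simps)
qed

lemma eigen_form_r_zero: "eigen_form C C' z P q (cnj q) (complex_of_real (aa x)) 1 r = 0"
proof -
  let ?m = "growth_ratio z r (aa x) (bb x)"
  have "f1 (x-1) * ((C' * complex_of_real (aa x) - z * P) * ?m + cnj (bb x) * r - z * q * r * ?m)
      = C' * complex_of_real (aa x) * f1 x + cnj (bb x) * f2 x - z * (P * f1 x + q * f2 (x+1))"
    using f1_step[of x] f2_eq_r_f1[of x] f2_eq_r_f1[of "x-1"] by (simp add: algebra_simps)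
  then have zero: "(C' * complex_of_real (aa x) - z * P) * ?m + cnj (bb x) * r - z * q * r * ?m = 0"
    using E1[of x] f2_eq_r_f1[of "x-1"] by simp
  have "bb x * ?m = z * cnj q + (C * complex_of_real (aa x) - z * P) * r"
    unfolding growth_ratio_def using bb_nz[of x] by simp
  from eigen_form_ratio[where q = q, OF this bb_cnj C_C'] zero show ?thesis by simp
qed

lemma norm_growth_ratio_right: "cmod (growth_ratio z r ap bp) < 1"
proof (rule geometric_tendsto_zero_imp_norm_less_1[of "\<lambda>n. f1 (int n - 1)"])
  show "f1 (int (Suc n) - 1) = growth_ratio z r ap bp * f1 (int n - 1)" for n
    using f1_step[of "int n"] by (simp add: aa_pos bb_pos)
  show "(\<lambda>n. f1 (int n - 1)) \<longlonglongrightarrow> 0" using tendsto_zero_at_top(1)[of "-1"] by simp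
qed (use f1_minus_one_nz in simp)

lemma norm_growth_ratio_left: "cmod (growth_ratio z r am bm) > 1"
proof (rule backward_geometric_tendsto_zero_imp_norm_greater_1[of "\<lambda>n. f1 (-1 - int n)"])
  show "f1 (-1 - int n) = growth_ratio z r am bm * f1 (-1 - int (Suc n))" for n
    using f1_step[of "-1 - int n"] by (simp add: aa_neg bb_neg algebra_simps)
qed (use f1_minus_one_nz tendsto_zero_at_bot in simp_all)

lemma ap_neq_am: "ap \<noteq> am"
proof
  assume "ap = am"
  then have "cmod (growth_ratio z r ap bp) = cmod (growth_ratio z r am bm)"
    using norm_bp_eq_norm_bm unfolding growth_ratio_def by (simp add: norm_divide)
  then show False using norm_growth_ratio_right norm_growth_ratio_left by simp
qed

lemma coefficients_zero: "lin_coeff z r = 0" "const_coeff z r = 0"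
proof -
  have coeffs: "const_coeff z r + complex_of_real a * lin_coeff z r = 0" if "a = ap \<or> a = am" for a
    using eigen_form_r_zero[of 0] eigen_form_r_zero[of "-1"] that
    unfolding eigen_form_eq_coeffs by (auto simp: aa_pos aa_neg)
  have "(complex_of_real ap - complex_of_real am) * lin_coeff z r
      = (const_coeff z r + complex_of_real ap * lin_coeff z r) - (const_coeff z r + complex_of_real am * lin_coeff z r)"
    by (simp add: algebra_simps)
  then have "(complex_of_real ap - complex_of_real am) * lin_coeff z r = 0" using coeffs by simp
  then show "lin_coeff z r = 0" using ap_neq_am by simp
  then show "const_coeff z r = 0" using coeffs[of ap] by simp
qed


lemma eigenvalue_in_sigma: "z \<in> sigma_minus \<gamma> p q ap am \<union> sigma_plus \<gamma> p q ap am"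
proof -
  obtain \<sigma> l \<epsilon> where r: "r = complex_of_real \<sigma> / q" and z: "z = complex_of_real l" and "l \<noteq> 0"
    and eps: "\<epsilon> = 1 \<or> \<epsilon> = -1" and rel: "l * (p*\<sigma> - (1 - p^2)) = \<epsilon> * c * \<sigma>"
    and root: "c^2*\<sigma>^2 + p*(c^2+1)*\<sigma> - (1 - p^2) = 0"
    using coefficients_zero_imp_spectral_data[OF z_nz coefficients_zero] .
  have "(cmod bp)^2 = 1 - ap^2" "(cmod bm)^2 = 1 - am^2" using abp abm by simp_all
  note compare = norm_growth_ratio_compare_1[OF z r] decay_discriminant_sign_iff[OF \<open>l \<noteq> 0\<close> eps rel root]
  have "\<epsilon> * sgn l * p_gamma' \<gamma> p q < \<epsilon>*ap"
    using norm_growth_ratio_right compare(1)[OF \<open>(cmod bp)^2 = _\<close> ap_lo ap_hi] compare(3)[OF ap_lo ap_hi] by simp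
  moreover have "\<epsilon>*am < \<epsilon> * sgn l * p_gamma' \<gamma> p q"
    using norm_growth_ratio_left compare(2)[OF \<open>(cmod bm)^2 = _\<close> am_lo am_hi] compare(4)[OF am_lo am_hi] by simp
  moreover have "l^2 - 2*(\<epsilon>*p * sinh (2*\<gamma>))*l - 1 = 0"
    using spectral_eigenvalue_equation[OF c_pos p_lo p_hi eps rel root] sinh_eigenvalue_equation_iff by simp
  ultimately show ?thesis unfolding mem_sigma_union_iff using z \<open>l \<noteq> 0\<close> eps by blast
qed
end

theorem theorem3p3:
  fixes \<gamma> p ap am :: real and q bp bm :: complex
  assumes "-1 < p" "p < 1" "p\<^sup>2 + (cmod q)\<^sup>2 = 1"
    and "-1 < ap" "ap < 1" "-1 < am" "am < 1"
    and "ap\<^sup>2 + (cmod bp)\<^sup>2 = 1" "am\<^sup>2 + (cmod bm)\<^sup>2 = 1"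
  shows "point_spectrum \<gamma> p q (two_phase ap am) (two_phase bp bm)
           = sigma_minus \<gamma> p q ap am \<union> sigma_plus \<gamma> p q ap am"
proof -
  interpret two_phase_walk \<gamma> p ap am q bp bm using assms by unfold_locales
  show ?thesis
  proof (intro set_eqI iffI)
    fix z
    assume "z \<in> point_spectrum \<gamma> p q (two_phase ap am) (two_phase bp bm)"
    then obtain \<Psi> where "\<Psi> \<in> ell2Z2" "\<Psi> \<noteq> (\<lambda>_. (0, 0))" "eigen_equations z \<Psi>"
      unfolding point_spectrum_def walk_op_eigen_iff_eigen_equations by blast
    then interpret decaying_eigen_solution \<gamma> p ap am q bp bm z \<Psi>
      by unfold_locales
    show "z \<in> sigma_minus \<gamma> p q ap am \<union> sigma_plus \<gamma> p q ap am" by (rule eigenvalue_in_sigma)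
  next
    fix z
    assume "z \<in> sigma_minus \<gamma> p q ap am \<union> sigma_plus \<gamma> p q ap am"
    then show "z \<in> point_spectrum \<gamma> p q (two_phase ap am) (two_phase bp bm)"
      unfolding point_spectrum_def walk_op_eigen_iff_eigen_equations mem_Collect_eq
      by (rule eigenvector_of_sigma)
  qed
qed

end
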